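(* There exists no generalized matching mechanism that is resolute, symmetric and Pareto optimal.
   Context: Fix $n\ge 2$, $W=\{1,\dots,n\}$ (women), $M=\{n+1,\dots,2n\}$ (men), $I=W\cup M$. Permutations compose right-to-left. A generalized preference profile is a function $\bar p$ on $I$ assigning to each $x\in W$ a linear order $\bar p(x)$ on $M\cup\{x\}$ and to each $y\in M$ a linear order $\bar p(y)$ on $W\cup\{y\}$ (being ranked oneself means being unmatched); $\overline{\mathcal{P}}$ is the set of these. A generalized matching is a permutation $\bar\mu$ of $I$ such that for $x\in W$, $\bar\mu(x)\ne x$ implies $\bar\mu(x)\in M$; for $y\in M$, $\bar\mu(y)\neq y$ implies $\bar\mu(y)\in W$; and $\bar\mu(\bar\mu(z))=z$ for all $z$; $\overline{\mathcal{M}}$ is the set of these. $\bar\mu$ is Pareto optimal for $\bar p$ if there is no $\bar\mu'\in\overline{\mathcal{M}}$ with $\bar\mu'(z)\succeq_{\bar p(z)}\bar\mu(z)$ for all $z\in I$ and $\bar\mu'(z^* )\succ_{\bar p(z^* )}\bar\mu(z^* )$ for some $z^*$. Let $G^*=\{\varphi\in\mathrm{Sym}(I):\{\varphi(W),\varphi(M)\}=\{W,M\}\}$. For a linear order $R$ on $X\subseteq I$ and $\varphi\in\mathrm{Sym}(I)$, $\varphi R$ is the relation on $\varphi(X)$ with $(a,b)\in\varphi R$ iff $(\varphi^{-1}(a),\varphi^{-1}(b))\in R$. For $\varphi\in G^*$, $\bar p^\varphi(z)=\varphi\,\bar p(\varphi^{-1}(z))$; for a permutation $\mu$, $\mu^\varphi=\varphi\mu\varphi^{-1}$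 and $S^\varphi=\{\mu^\varphi:\mu\in S\}$. A generalized matching mechanism is a correspondence $F$ from $\overline{\mathcal{P}}$ to $\overline{\mathcal{M}}$; it is resolute if $|F(\bar p)|=1$ for all $\bar p$; Pareto optimal if all elements of $F(\bar p)$ are Pareto optimal for $\bar p$, for all $\bar p$; symmetric if $F(\bar p^\varphi)=F(\bar p)^\varphi$ for all $\bar p\in\overline{\mathcal{P}}$, $\varphi\in G^*$. *)

theory Defs
  imports Main
begin

text \<open>A linear order R on a set X is a relation with linear_order_on X R;
  convention: (a,b) \<in> R means a is ranked weakly above b (a is weakly preferred to b).\<close>

definition women :: "nat \<Rightarrow> nat set" where "women n = {1..n}"
definition men :: "nat \<Rightarrow> nat set" where "men n = {n+1..2*n}"
definition agents :: "nat \<Rightarrow> nat set" where "agents n = women n \<union> men n"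

definition perm_of :: "nat \<Rightarrow> (nat \<Rightarrow> nat) \<Rightarrow> bool" where
  "perm_of n \<phi> \<longleftrightarrow> bij_betw \<phi> (agents n) (agents n) \<and> (\<forall>z. z \<notin> agents n \<longrightarrow> \<phi> z = z)"

definition gen_profiles :: "nat \<Rightarrow> (nat \<Rightarrow> nat rel) set" where
  "gen_profiles n = {p.
     (\<forall>x\<in>women n. linear_order_on (men n \<union> {x}) (p x)) \<and>
     (\<forall>y\<in>men n. linear_order_on (women n \<union> {y}) (p y)) \<and>
     (\<forall>z. z \<notin> agents n \<longrightarrow> p z = {})}"

definition gen_matchings :: "nat \<Rightarrow> (nat \<Rightarrow> nat) set" where
  "gen_matchings n = {\<mu>. perm_of n \<mu> \<and>
     (\<forall>x\<in>women n. \<mu> x \<noteq> x \<longrightarrow> \<mu> x \<in> men n) \<and>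
     (\<forall>y\<in>men n. \<mu> y \<noteq> y \<longrightarrow> \<mu> y \<in> women n) \<and>
     (\<forall>z\<in>agents n. \<mu> (\<mu> z) = z)}"

definition weakly_pref :: "nat rel \<Rightarrow> nat \<Rightarrow> nat \<Rightarrow> bool" where
  "weakly_pref R a b \<longleftrightarrow> (a, b) \<in> R"

definition strictly_pref :: "nat rel \<Rightarrow> nat \<Rightarrow> nat \<Rightarrow> bool" where
  "strictly_pref R a b \<longleftrightarrow> (a, b) \<in> R \<and> a \<noteq> b"

definition pareto_optimal :: "nat \<Rightarrow> (nat \<Rightarrow> nat rel) \<Rightarrow> (nat \<Rightarrow> nat) \<Rightarrow> bool" where
  "pareto_optimal n p \<mu> \<longleftrightarrow> \<mu> \<in> gen_matchings n \<and>
     \<not> (\<exists>\<mu>'\<in>gen_matchings n. (\<forall>z\<in>agents n. weakly_pref (p z) (\<mu>' z) (\<mu> z)) \<and>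
                               (\<exists>z\<in>agents n. strictly_pref (p z) (\<mu>' z) (\<mu> z)))"

definition Gstar :: "nat \<Rightarrow> (nat \<Rightarrow> nat) set" where
  "Gstar n = {\<phi>. perm_of n \<phi> \<and> {\<phi> ` women n, \<phi> ` men n} = {women n, men n}}"

definition rel_image :: "(nat \<Rightarrow> nat) \<Rightarrow> nat rel \<Rightarrow> nat rel" where
  "rel_image \<phi> R = (\<lambda>(a, b). (\<phi> a, \<phi> b)) ` R"

definition profile_perm :: "(nat \<Rightarrow> nat rel) \<Rightarrow> (nat \<Rightarrow> nat) \<Rightarrow> (nat \<Rightarrow> nat rel)" where
  "profile_perm p \<phi> = (\<lambda>z. rel_image \<phi> (p (inv \<phi> z)))"

definition matching_perm :: "(nat \<Rightarrow> nat) \<Rightarrow> (nat \<Rightarrow> nat) \<Rightarrow> (nat \<Rightarrow> nat)" where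
  "matching_perm \<mu> \<phi> = \<phi> \<circ> \<mu> \<circ> inv \<phi>"

definition gen_mechanism :: "nat \<Rightarrow> ((nat \<Rightarrow> nat rel) \<Rightarrow> (nat \<Rightarrow> nat) set) \<Rightarrow> bool" where
  "gen_mechanism n F \<longleftrightarrow> (\<forall>p\<in>gen_profiles n. F p \<subseteq> gen_matchings n)"

definition resolute :: "nat \<Rightarrow> ((nat \<Rightarrow> nat rel) \<Rightarrow> (nat \<Rightarrow> nat) set) \<Rightarrow> bool" where
  "resolute n F \<longleftrightarrow> (\<forall>p\<in>gen_profiles n. card (F p) = 1)"

definition pareto_optimal_mech :: "nat \<Rightarrow> ((nat \<Rightarrow> nat rel) \<Rightarrow> (nat \<Rightarrow> nat) set) \<Rightarrow> bool" where
  "pareto_optimal_mech n F \<longleftrightarrow> (\<forall>p\<in>gen_profiles n. \<forall>\<mu>\<in>F p. pareto_optimal n p \<mu>)"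

definition symmetric :: "nat \<Rightarrow> ((nat \<Rightarrow> nat rel) \<Rightarrow> (nat \<Rightarrow> nat) set) \<Rightarrow> bool" where
  "symmetric n F \<longleftrightarrow> (\<forall>p\<in>gen_profiles n. \<forall>\<phi>\<in>Gstar n.
      F (profile_perm p \<phi>) = (\<lambda>\<mu>. matching_perm \<mu> \<phi>) ` F p)"

end

theory Submission
  imports Defs
begin

text \<open>
  Seat the 2n agents at a round table, alternating women and men, and let every agent rank
  the opposite sex by clockwise distance in such a way that the diametrically opposite agent is
  the worst partner, ranked only above staying single. Rotating the table by one seat swaps
  women and men, so it lies in G*, and it leaves this profile unchanged. A resolute symmetric
  mechanism must therefore choose a matching that commutes with the rotation. Such a matching
  moves every agent by the same distance c, and since it is an involution, c = -c mod 2n: it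
  leaves everybody single or pairs everybody with the opposite agent. In both cases every agent
  strictly prefers the matching that pairs each agent with a neighbour at the table, so the
  chosen matching is not Pareto optimal.
\<close>

lemma women_iff: "z \<in> women n \<longleftrightarrow> 1 \<le> z \<and> z \<le> n"
  and men_iff: "z \<in> men n \<longleftrightarrow> n < z \<and> z \<le> 2 * n"
  and agents_iff: "z \<in> agents n \<longleftrightarrow> 1 \<le> z \<and> z \<le> 2 * n"
  by (auto simp: women_def men_def agents_def)

lemma women_men_disjoint: "women n \<inter> men n = {}"
  by (auto simp: women_iff men_iff)

lemma perm_of_imp_bij:
  assumes "perm_of n \<phi>"
  shows "bij \<phi>"
proof -
  have "bij_betw \<phi> (- agents n) (- agents n)"
    using assms bij_betw_cong[of "- agents n" \<phi> id] by (simp add: perm_of_def)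
  then show ?thesis
    using assms bij_betw_combine[of \<phi> "agents n" "agents n" "- agents n" "- agents n"]
    by (simp add: perm_of_def)
qed

lemma matching_perm_eq_self_iff:
  assumes "bij \<phi>"
  shows "matching_perm \<mu> \<phi> = \<mu> \<longleftrightarrow> (\<forall>z. \<mu> (\<phi> z) = \<phi> (\<mu> z))"
proof -
  have "\<phi> \<circ> \<mu> \<circ> inv \<phi> = \<mu> \<longleftrightarrow> \<phi> \<circ> \<mu> = \<mu> \<circ> \<phi>"
  proof
    assume "\<phi> \<circ> \<mu> \<circ> inv \<phi> = \<mu>"
    then have "\<phi> \<circ> \<mu> \<circ> inv \<phi> \<circ> \<phi> = \<mu> \<circ> \<phi>" by simp
    then show "\<phi> \<circ> \<mu> = \<mu> \<circ> \<phi>" using assms by (simp add: comp_assoc bij_is_inj)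
  next
    assume "\<phi> \<circ> \<mu> = \<mu> \<circ> \<phi>"
    then have "\<phi> \<circ> \<mu> \<circ> inv \<phi> = \<mu> \<circ> \<phi> \<circ> inv \<phi>" by simp
    then show "\<phi> \<circ> \<mu> \<circ> inv \<phi> = \<mu>"
      using assms surj_iff bij_is_surj by (metis comp_assoc comp_id)
  qed
  then show ?thesis by (auto simp: matching_perm_def fun_eq_iff)
qed

lemma profile_perm_eq_self:
  assumes "bij \<phi>" and "\<And>z. rel_image \<phi> (p z) = p (\<phi> z)"
  shows "profile_perm p \<phi> = p"
  using assms by (auto simp: profile_perm_def bij_is_surj surj_f_inv_f)

lemma resolute_symmetric_fixed_outcome:
  assumes "resolute n F" and "symmetric n F" and "p \<in> gen_profiles n" and "\<phi> \<in> Gstar n"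
    and "profile_perm p \<phi> = p"
  obtains \<mu> where "F p = {\<mu>}" and "matching_perm \<mu> \<phi> = \<mu>"
proof -
  obtain \<mu> where \<mu>: "F p = {\<mu>}"
    using assms(1,3) by (auto simp: resolute_def card_1_singleton_iff)
  have "F p = (\<lambda>\<mu>. matching_perm \<mu> \<phi>) ` F p"
    using assms(2-5) unfolding symmetric_def by metis
  with \<mu> have "matching_perm \<mu> \<phi> = \<mu>" by simp
  with \<mu> show ?thesis using that by blast
qed

lemma not_pareto_optimal_if_dominated:
  assumes "\<mu>' \<in> gen_matchings n" and "agents n \<noteq> {}"
    and "\<And>z. z \<in> agents n \<Longrightarrow> strictly_pref (p z) (\<mu>' z) (\<mu> z)"
  shows "\<not> pareto_optimal n p \<mu>"
  using assms unfolding pareto_optimal_def strictly_pref_def weakly_pref_def by blast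

lemma matching_in_agents:
  assumes "\<mu> \<in> gen_matchings n" and "z \<in> agents n"
  shows "\<mu> z \<in> agents n"
  using assms by (auto simp: gen_matchings_def perm_of_def dest: bij_betwE)

definition key_order :: "'a set \<Rightarrow> ('a \<Rightarrow> 'b::linorder) \<Rightarrow> 'a rel" where
  "key_order A g = {(x, y). x \<in> A \<and> y \<in> A \<and> g x \<le> g y}"

lemma linear_order_on_key_order:
  assumes "inj_on g A"
  shows "linear_order_on A (key_order A g)"
  using assms
  unfolding key_order_def linear_order_on_def partial_order_on_def preorder_on_def refl_on_def
    trans_def antisym_def total_on_def
  by (auto dest: inj_onD)

lemma rel_image_key_order:
  assumes "\<And>x. x \<in> A \<Longrightarrow> h (f x) = g x"
  shows "rel_image f (key_order A g) = key_order (f ` A) h"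
  using assms unfolding rel_image_def key_order_def by (auto simp: image_iff)

section \<open>The round table\<close>

text \<open>
  The round table has seats 0, ..., 2n - 1: woman i sits at seat 2i - 2 and man n + i at
  seat 2i - 1, and rotate moves every agent one seat clockwise.
\<close>

definition seat :: "nat \<Rightarrow> nat \<Rightarrow> int" where
  "seat n z = (if z \<le> n then 2 * int z - 2 else 2 * (int z - int n) - 1)"

lemma seat_bounds:
  assumes "z \<in> agents n"
  shows "0 \<le> seat n z" and "seat n z < 2 * int n"
  using assms by (auto simp: seat_def agents_iff)

lemma inj_on_seat: "inj_on (seat n) (agents n)"
  by (auto intro!: inj_onI simp: seat_def agents_iff split: if_splits; presburger)

definition rotate :: "nat \<Rightarrow> nat \<Rightarrow> nat" where
  "rotate n z =
     (if z \<in> women n then z + n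
      else if z \<in> men n then (if z = 2 * n then 1 else z - n + 1)
      else z)"

lemma seat_rotate:
  assumes "z \<in> agents n"
  shows "seat n (rotate n z) = (seat n z + 1) mod (2 * int n)"
proof (cases "z = 2 * n")
  case True
  then show ?thesis using assms by (simp add: seat_def rotate_def women_iff men_iff agents_iff)
next
  case False
  then have "seat n (rotate n z) = seat n z + 1" and "seat n z + 1 < 2 * int n"
    using assms by (auto simp: seat_def rotate_def women_iff men_iff agents_iff)
  then show ?thesis using seat_bounds[OF assms] by simp
qed

lemma rotate_outside: "z \<notin> agents n \<Longrightarrow> rotate n z = z"
  by (simp add: rotate_def agents_def)

lemma rotate_women: "rotate n ` women n = men n"
proof
  show "rotate n ` women n \<subseteq> men n"
    by (auto simp: rotate_def women_iff men_iff)
  have "m = rotate n (m - n) \<and> m - n \<in> women n" if "m \<in> men n" for m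
    using that by (auto simp: rotate_def women_iff men_iff)
  then show "men n \<subseteq> rotate n ` women n"
    by blast
qed

lemma rotate_men:
  assumes "1 \<le> n"
  shows "rotate n ` men n = women n"
proof
  show "rotate n ` men n \<subseteq> women n"
    by (auto simp: rotate_def women_iff men_iff)
  show "women n \<subseteq> rotate n ` men n"
  proof
    fix w assume "w \<in> women n"
    define m where "m = (if w = 1 then 2 * n else w + n - 1)"
    have "w = rotate n m" and "m \<in> men n"
      using \<open>w \<in> women n\<close> assms by (auto simp: m_def rotate_def women_iff men_iff)
    then show "w \<in> rotate n ` men n"
      by blast
  qed
qed

lemma rotate_agents: "1 \<le> n \<Longrightarrow> rotate n ` agents n = agents n"
  by (simp add: agents_def image_Un rotate_women rotate_men Un_commute)

lemma inj_on_rotate: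
  assumes "1 \<le> n"
  shows "inj_on (rotate n) (agents n)"
proof (rule eq_card_imp_inj_on)
  show "finite (agents n)"
    by (simp add: agents_def women_def men_def)
  show "card (rotate n ` agents n) = card (agents n)"
    using assms by (simp add: rotate_agents)
qed

lemma rotate_in_Gstar:
  assumes "1 \<le> n"
  shows "rotate n \<in> Gstar n"
proof -
  have "bij_betw (rotate n) (agents n) (agents n)"
    using assms by (simp add: bij_betw_def inj_on_rotate rotate_agents)
  then show ?thesis
    using assms by (auto simp: Gstar_def perm_of_def rotate_outside rotate_women rotate_men)
qed

lemma bij_rotate: "1 \<le> n \<Longrightarrow> bij (rotate n)"
  using rotate_in_Gstar by (auto simp: Gstar_def intro: perm_of_imp_bij)

lemma rotate_invariant_constant:
  assumes "1 \<le> n" and invariant: "\<And>z. z \<in> agents n \<Longrightarrow> f (rotate n z) = f z"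
    and "z \<in> agents n"
  shows "f z = f 1"
proof -
  have women: "f (Suc k) = f 1" if "k < n" for k
    using that
  proof (induction k)
    case (Suc k)
    have "Suc (Suc k) = rotate n (rotate n (Suc k))" and "rotate n (Suc k) \<in> agents n"
      using Suc.prems by (auto simp: rotate_def women_iff men_iff agents_iff)
    then show ?case
      using Suc invariant by (simp add: agents_iff)
  qed simp
  show ?thesis
  proof (cases "z \<le> n")
    case True
    then show ?thesis using women[of "z - 1"] \<open>z \<in> agents n\<close> by (simp add: agents_iff)
  next
    case False
    define k where "k = z - Suc n"
    have "z = Suc k + n" and "k < n"
      using False \<open>z \<in> agents n\<close> by (auto simp: k_def agents_iff)
    then have "z = rotate n (Suc k)" and "Suc k \<in> agents n"
      by (auto simp: rotate_def women_iff agents_iff)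
    then show ?thesis
      using invariant women[OF \<open>k < n\<close>] by metis
  qed
qed

lemma minus_mod_double_eq_self:
  fixes c m :: int
  assumes "0 < c" and "c < 2 * m" and "(- c) mod (2 * m) = c"
  shows "c = m"
  using assms by (simp add: zmod_zminus1_eq_if split: if_splits)

definition offset :: "nat \<Rightarrow> nat \<Rightarrow> nat \<Rightarrow> int" where
  "offset n z x = (seat n x - seat n z) mod (2 * int n)"

lemma offset_self [simp]: "offset n z z = 0"
  by (simp add: offset_def)

lemma offset_bounds:
  assumes "z \<in> agents n"
  shows "0 \<le> offset n z x" and "offset n z x < 2 * int n"
  using assms by (simp_all add: offset_def agents_iff)

lemma offset_swap: "offset n x z = (- offset n z x) mod (2 * int n)"
  by (simp add: offset_def mod_minus_eq)

lemma inj_on_offset: "inj_on (offset n z) (agents n)"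
proof (rule inj_onI)
  fix x y assume x: "x \<in> agents n" and y: "y \<in> agents n" and eq: "offset n z x = offset n z y"
  have "(seat n x - seat n z + seat n z) mod (2 * int n)
      = (seat n y - seat n z + seat n z) mod (2 * int n)"
    using eq unfolding offset_def by (rule mod_add_cong) simp
  then have "seat n x = seat n y"
    using seat_bounds[OF x] seat_bounds[OF y] by simp
  then show "x = y"
    using inj_on_seat x y by (auto dest: inj_onD)
qed

lemma offset_rotate:
  assumes "z \<in> agents n" and "x \<in> agents n"
  shows "offset n (rotate n z) (rotate n x) = offset n z x"
  using assms by (simp add: offset_def seat_rotate mod_diff_eq)

section \<open>A rotation-invariant profile\<close>

definition candidates :: "nat \<Rightarrow> nat \<Rightarrow> nat set" where
  "candidates n z = (if z \<in> women n then men n else women n) \<union> {z}"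

text \<open>
  Lower rank means more preferred. The shift by n - 1 gives the opposite agent (offset n) the
  rank 2n - 1, the largest below the rank 2n of staying single.
\<close>

definition rank :: "nat \<Rightarrow> nat \<Rightarrow> nat \<Rightarrow> int" where
  "rank n z x = (if x = z then 2 * int n else (offset n z x + (int n - 1)) mod (2 * int n))"

definition cyclic_profile :: "nat \<Rightarrow> nat \<Rightarrow> nat rel" where
  "cyclic_profile n z = (if z \<in> agents n then key_order (candidates n z) (rank n z) else {})"

lemma matching_in_candidates:
  assumes "\<mu> \<in> gen_matchings n" and "z \<in> agents n"
  shows "\<mu> z \<in> candidates n z"
  using assms by (auto simp: gen_matchings_def candidates_def agents_def)

lemma candidates_subset_agents: "z \<in> agents n \<Longrightarrow> candidates n z \<subseteq> agents n"
  by (auto simp: candidates_def agents_def)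

lemma inj_on_rank: "inj_on (rank n z) (agents n)"
proof (rule inj_onI)
  fix x y assume x: "x \<in> agents n" and y: "y \<in> agents n" and eq: "rank n z x = rank n z y"
  have "0 < n"
    using x by (simp add: agents_iff)
  then have "rank n z w < 2 * int n" if "w \<noteq> z" for w
    using that by (simp add: rank_def)
  then consider "x = z" "y = z" | "x \<noteq> z" "y \<noteq> z"
    using eq by (metis less_irrefl rank_def)
  then show "x = y"
  proof cases
    case 2
    then have "(offset n z x + (int n - 1)) mod (2 * int n)
             = (offset n z y + (int n - 1)) mod (2 * int n)"
      using eq by (simp add: rank_def)
    then have "(offset n z x + (int n - 1) - (int n - 1)) mod (2 * int n)
             = (offset n z y + (int n - 1) - (int n - 1)) mod (2 * int n)"
      by (rule mod_diff_cong) (rule refl)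
    then have "offset n z x = offset n z y"
      by (simp add: offset_def)
    then show "x = y"
      using inj_on_offset x y by (blast dest: inj_onD)
  qed simp
qed

lemma rank_rotate:
  assumes "1 \<le> n" and "z \<in> agents n" and "x \<in> agents n"
  shows "rank n (rotate n z) (rotate n x) = rank n z x"
  using assms inj_on_rotate[OF assms(1)]
  by (auto simp: rank_def offset_rotate dest: inj_onD)

lemma cyclic_profile_in_gen_profiles: "cyclic_profile n \<in> gen_profiles n"
proof -
  have linear: "linear_order_on (candidates n z) (cyclic_profile n z)" if "z \<in> agents n" for z
    using that candidates_subset_agents[OF that]
    by (simp add: cyclic_profile_def linear_order_on_key_order inj_on_subset[OF inj_on_rank])
  have "linear_order_on (men n \<union> {x}) (cyclic_profile n x)" if "x \<in> women n" for x
    using that linear[of x] by (simp add: candidates_def agents_def)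
  moreover have "linear_order_on (women n \<union> {y}) (cyclic_profile n y)" if "y \<in> men n" for y
  proof -
    have "y \<notin> women n"
      using that women_men_disjoint by blast
    then show ?thesis
      using that linear[of y] by (simp add: candidates_def agents_def)
  qed
  ultimately show ?thesis
    by (simp add: gen_profiles_def cyclic_profile_def)
qed

lemma rotate_candidates:
  assumes "1 \<le> n" and "z \<in> agents n"
  shows "rotate n ` candidates n z = candidates n (rotate n z)"
proof (cases "z \<in> women n")
  case True
  then have "rotate n z \<notin> women n"
    using rotate_women women_men_disjoint by blast
  then show ?thesis
    using True assms by (simp add: candidates_def rotate_men)
next
  case False
  then have "rotate n z \<in> women n"
    using assms rotate_men by (auto simp: agents_def)
  then show ?thesis
    using False by (simp add: candidates_def rotate_women)
qed

lemma cyclic_profile_rotate: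
  assumes "1 \<le> n"
  shows "profile_perm (cyclic_profile n) (rotate n) = cyclic_profile n"
proof (rule profile_perm_eq_self)
  show "bij (rotate n)"
    using assms by (rule bij_rotate)
  fix z
  show "rel_image (rotate n) (cyclic_profile n z) = cyclic_profile n (rotate n z)"
  proof (cases "z \<in> agents n")
    case True
    then have "rotate n z \<in> agents n"
      using rotate_agents[OF assms] by blast
    moreover have "rel_image (rotate n) (key_order (candidates n z) (rank n z))
        = key_order (rotate n ` candidates n z) (rank n (rotate n z))"
      using True candidates_subset_agents[OF True]
      by (intro rel_image_key_order) (auto simp: rank_rotate[OF assms])
    ultimately show ?thesis
      using True by (simp add: cyclic_profile_def rotate_candidates[OF assms])
  qed (simp add: cyclic_profile_def rotate_outside rel_image_def)
qed

section \<open>Rotation-invariant matchings are dominated\<close>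

lemma rotation_invariant_matching_offset:
  assumes "1 \<le> n" and \<mu>: "\<mu> \<in> gen_matchings n"
    and commute: "\<And>z. \<mu> (rotate n z) = rotate n (\<mu> z)"
    and z: "z \<in> agents n" and "\<mu> z \<noteq> z"
  shows "offset n z (\<mu> z) = int n"
proof -
  have offset_constant: "offset n x (\<mu> x) = offset n 1 (\<mu> 1)" if "x \<in> agents n" for x
    by (rule rotate_invariant_constant[where f = "\<lambda>x. offset n x (\<mu> x)", OF assms(1) _ that])
      (simp add: commute offset_rotate matching_in_agents[OF \<mu>])
  have "1 \<in> agents n" and "\<mu> 1 \<in> agents n"
    using assms(1) matching_in_agents[OF \<mu>] by (auto simp: agents_iff)
  then have "offset n (\<mu> 1) 1 = offset n 1 (\<mu> 1)"
    using \<mu> offset_constant[of "\<mu> 1"] by (simp add: gen_matchings_def)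
  then have antipodal: "(- offset n 1 (\<mu> 1)) mod (2 * int n) = offset n 1 (\<mu> 1)"
    using offset_swap[of n "\<mu> 1" 1] by simp
  have "offset n z (\<mu> z) \<noteq> 0"
    using inj_on_offset z matching_in_agents[OF \<mu> z] \<open>\<mu> z \<noteq> z\<close>
    by (metis inj_onD offset_self)
  then have "0 < offset n 1 (\<mu> 1)"
    using offset_constant[OF z] offset_bounds(1)[OF \<open>1 \<in> agents n\<close>, of "\<mu> 1"] by linarith
  then have "offset n 1 (\<mu> 1) = int n"
    using offset_bounds(2)[OF \<open>1 \<in> agents n\<close>, of "\<mu> 1"] antipodal
    by (rule minus_mod_double_eq_self)
  then show ?thesis
    using offset_constant[OF z] by simp
qed

lemma rank_rotation_invariant_matching:
  assumes "1 \<le> n" and "\<mu> \<in> gen_matchings n"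
    and "\<And>z. \<mu> (rotate n z) = rotate n (\<mu> z)" and "z \<in> agents n"
  shows "2 * int n - 1 \<le> rank n z (\<mu> z)"
proof (cases "\<mu> z = z")
  case False
  then have "rank n z (\<mu> z) = (2 * int n - 1) mod (2 * int n)"
    using rotation_invariant_matching_offset[OF assms False] by (simp add: rank_def)
  then show ?thesis
    using assms(1) by (simp add: zmod_minus1)
qed (simp add: rank_def)

definition neighbour_matching :: "nat \<Rightarrow> nat \<Rightarrow> nat" where
  "neighbour_matching n z = (if z \<in> women n then z + n else if z \<in> men n then z - n else z)"

lemma neighbour_matching_in_gen_matchings: "neighbour_matching n \<in> gen_matchings n"
proof -
  have involution: "neighbour_matching n (neighbour_matching n z) = z" for z
    by (auto simp: neighbour_matching_def women_iff men_iff)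
  have "neighbour_matching n ` agents n \<subseteq> agents n"
    by (auto simp: neighbour_matching_def women_iff men_iff agents_iff)
  then have "bij_betw (neighbour_matching n) (agents n) (agents n)"
    using involution by (intro bij_betw_byWitness[where f' = "neighbour_matching n"]) auto
  then show ?thesis
    using involution
    by (auto simp: gen_matchings_def perm_of_def neighbour_matching_def women_iff men_iff agents_iff)
qed

lemma rank_neighbour_matching:
  assumes "2 \<le> n" and "z \<in> agents n"
  shows "rank n z (neighbour_matching n z) \<le> int n"
proof (cases "z \<in> women n")
  case True
  then have "offset n z (neighbour_matching n z) = 1"
    by (auto simp: offset_def seat_def neighbour_matching_def women_iff)
  then show ?thesis
    using True by (simp add: rank_def neighbour_matching_def)
next
  case False
  then have "z \<in> men n" and "offset n z (neighbour_matching n z) = 2 * int n - 1"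
    using assms by (auto simp: offset_def seat_def neighbour_matching_def women_iff men_iff agents_iff
        zmod_minus1)
  moreover have "(2 * int n - 1 + (int n - 1)) mod (2 * int n) = int n - 2"
  proof -
    have "(2 * int n - 1 + (int n - 1)) mod (2 * int n) = (int n - 2 + 2 * int n) mod (2 * int n)"
      by (simp add: algebra_simps)
    also have "\<dots> = int n - 2"
      using assms(1) by (simp only: mod_add_self2) simp
    finally show ?thesis .
  qed
  ultimately show ?thesis
    using False assms(1) by (auto simp: rank_def neighbour_matching_def men_iff)
qed

lemma rotation_invariant_matching_not_pareto_optimal:
  assumes "2 \<le> n" and "\<mu> \<in> gen_matchings n" and "\<And>z. \<mu> (rotate n z) = rotate n (\<mu> z)"
  shows "\<not> pareto_optimal n (cyclic_profile n) \<mu>"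
proof (rule not_pareto_optimal_if_dominated[OF neighbour_matching_in_gen_matchings])
  show "agents n \<noteq> {}"
    using assms(1) agents_iff[of 1 n] by auto
  fix z assume z: "z \<in> agents n"
  have "rank n z (neighbour_matching n z) < rank n z (\<mu> z)"
    using rank_neighbour_matching[OF assms(1) z] rank_rotation_invariant_matching[OF _ assms(2,3) z]
      assms(1)
    by fastforce
  moreover have "neighbour_matching n z \<in> candidates n z"
    using z neighbour_matching_in_gen_matchings by (rule matching_in_candidates[rotated])
  ultimately show "strictly_pref (cyclic_profile n z) (neighbour_matching n z) (\<mu> z)"
    using z matching_in_candidates[OF assms(2) z]
    by (auto simp: strictly_pref_def cyclic_profile_def key_order_def)
qed

theorem theorem9:
  fixes n :: nat
  assumes "n \<ge> 2"
  shows "\<not> (\<exists>F. gen_mechanism n F \<and> resolute n F \<and> symmetric n F \<and> pareto_optimal_mech n F)"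
proof
  assume "\<exists>F. gen_mechanism n F \<and> resolute n F \<and> symmetric n F \<and> pareto_optimal_mech n F"
  then obtain F where "gen_mechanism n F" "resolute n F" "symmetric n F" "pareto_optimal_mech n F"
    by blast
  have "1 \<le> n"
    using assms by simp
  obtain \<mu> where outcome: "F (cyclic_profile n) = {\<mu>}" and "matching_perm \<mu> (rotate n) = \<mu>"
    using resolute_symmetric_fixed_outcome[OF \<open>resolute n F\<close> \<open>symmetric n F\<close>
        cyclic_profile_in_gen_profiles rotate_in_Gstar[OF \<open>1 \<le> n\<close>]
        cyclic_profile_rotate[OF \<open>1 \<le> n\<close>]] .
  then have "\<forall>z. \<mu> (rotate n z) = rotate n (\<mu> z)"
    using matching_perm_eq_self_iff[OF bij_rotate[OF \<open>1 \<le> n\<close>]] by blast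
  moreover have "\<mu> \<in> gen_matchings n" and "pareto_optimal n (cyclic_profile n) \<mu>"
    using \<open>gen_mechanism n F\<close> \<open>pareto_optimal_mech n F\<close> cyclic_profile_in_gen_profiles[of n] outcome
    by (auto simp: gen_mechanism_def pareto_optimal_mech_def)
  ultimately show False
    using rotation_invariant_matching_not_pareto_optimal[OF assms] by blast
qed

end
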